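(* Let $d,\tilde d\in\ell^\infty(\mathbb{Z})$ be limit-periodic potentials with frequency integer sets $S_d$ and $S_{\tilde d}$ respectively. Then $\Omega_d\cong\Omega_{\tilde d}$ (as topological groups) if and only if for every $n\in S_d$ there exists $m\in S_{\tilde d}$ with $n\mid m$, and for every $m\in S_{\tilde d}$ there exists $n\in S_d$ with $m\mid n$.
   Context: $\ell^\infty(\mathbb{Z})$ carries the sup norm; $\sigma$ is the left shift, $(\sigma d)_n=d_{n+1}$. For $d\in\ell^\infty(\mathbb{Z})$, $\mathrm{orb}(d)=\{\sigma^k d: k\in\mathbb{Z}\}$ and $\Omega_d=\mathrm{hull}(d)$ is the closure of $\mathrm{orb}(d)$ in $\ell^\infty(\mathbb{Z})$. A potential $p$ is periodic if $\mathrm{orb}(p)$ is finite; $d$ is limit-periodic if it lies in the $\ell^\infty$-closure of the set of periodic potentials. For limit-periodic $d$, $\Omega_d$ is compact and carries a unique topological group structure (which is abelian) with identity $d$ such that $k\mapsto\sigma^k(d)$ is a group homomorphism $\mathbb{Z}\to\Omega_d$; isomorphisms of hulls refer to this structure. The frequency module $F_d\subset\mathbb{R}$ is the set of $\alpha\in\mathbb{R}$ such that $\sigma^k(d)\mapsto e^{ik\alpha}$ extends to a continuous character of $\Omega_d$ (equivalently, the $\mathbb{Z}$-module generated by those $\alpha$ with $\lim_{n\to\infty}\frac1{2n}\sum_{k=-n}^n d(k)e^{-ik\alpha}\neq0$). A frequency integer set of $d$ is a set $S=\{n_j\}$ of positive integers with $n_j\mid n_{j+1}$ for all $j$ such that $F_d$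 is the $\mathbb{Z}$-module generated by $\{2\pi/n_j: n_j\in S\}$. *)

theory Defs
  imports "HOL-Analysis.Analysis"
begin

text \<open>Since int carries the
discrete topology, the type of bounded continuous functions from int to real is exactly
ell-infinity(Z) with its sup-norm metric.\<close>

type_synonym linf = "int \<Rightarrow>\<^sub>C real"

definition shiftk :: "int \<Rightarrow> linf \<Rightarrow> linf" where
  "shiftk k f = Bcontfun (\<lambda>n. apply_bcontfun f (n + k))"

definition orb :: "linf \<Rightarrow> linf set" where
  "orb d = {shiftk k d | k. True}"

definition lp_hull :: "linf \<Rightarrow> linf set" where
  "lp_hull d = closure (orb d)"

definition periodic_pot :: "linf \<Rightarrow> bool" where
  "periodic_pot p \<longleftrightarrow> finite (orb p)"

definition limit_periodic :: "linf \<Rightarrow> bool" where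
  "limit_periodic d \<longleftrightarrow> d \<in> closure {p. periodic_pot p}"

definition hull_group :: "linf \<Rightarrow> (linf \<Rightarrow> linf \<Rightarrow> linf) \<Rightarrow> (linf \<Rightarrow> linf) \<Rightarrow> bool" where
  "hull_group d m iv \<longleftrightarrow>
     (\<forall>x\<in>lp_hull d. \<forall>y\<in>lp_hull d. m x y \<in> lp_hull d) \<and>
     (\<forall>x\<in>lp_hull d. iv x \<in> lp_hull d) \<and>
     (\<forall>x\<in>lp_hull d. \<forall>y\<in>lp_hull d. \<forall>z\<in>lp_hull d. m (m x y) z = m x (m y z)) \<and>
     (\<forall>x\<in>lp_hull d. m d x = x \<and> m x d = x) \<and>
     (\<forall>x\<in>lp_hull d. m (iv x) x = d \<and> m x (iv x) = d) \<and>
     continuous_on (lp_hull d \<times> lp_hull d) (\<lambda>(x, y). m x y) \<and>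
     continuous_on (lp_hull d) iv \<and>
     (\<forall>j k. m (shiftk j d) (shiftk k d) = shiftk (j + k) d)"

text \<open>Isomorphism of hulls as topological groups (w.r.t. the (unique) group structures).\<close>
definition hull_iso :: "linf \<Rightarrow> linf \<Rightarrow> bool" where
  "hull_iso d e \<longleftrightarrow>
     (\<exists>m iv m' iv' f g. hull_group d m iv \<and> hull_group e m' iv' \<and>
        homeomorphism (lp_hull d) (lp_hull e) f g \<and>
        (\<forall>x\<in>lp_hull d. \<forall>y\<in>lp_hull d. f (m x y) = m' (f x) (f y)))"

definition freq_module :: "linf \<Rightarrow> real set" where
  "freq_module d = {\<alpha>. \<exists>m iv chi. hull_group d m iv \<and>
      continuous_on (lp_hull d) chi \<and> chi ` lp_hull d \<subseteq> sphere (0::complex) 1 \<and>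
      (\<forall>x\<in>lp_hull d. \<forall>y\<in>lp_hull d. chi (m x y) = chi x * chi y) \<and>
      (\<forall>k. chi (shiftk k d) = exp (\<i> * of_real (of_int k * \<alpha>)))}"

definition int_span :: "real set \<Rightarrow> real set" where
  "int_span A = {\<Sum>a\<in>B. of_int (c a) * a | B c. finite B \<and> B \<subseteq> A}"

definition freq_int_set :: "linf \<Rightarrow> nat set \<Rightarrow> bool" where
  "freq_int_set d S \<longleftrightarrow>
     (\<exists>n :: nat \<Rightarrow> nat. S = range n \<and> (\<forall>j. 0 < n j \<and> n j dvd n (Suc j)) \<and>
        freq_module d = int_span ((\<lambda>k. 2 * pi / real k) ` S))"

end

theory Submission
  imports Defs
begin

text \<open>Call \<open>p\<close> a period of the hull of \<open>d\<close> if \<open>k \<mapsto> k mod p\<close> extends continuously from the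
  orbit to \<open>\<Omega>\<^sub>d\<close>, i.e.\ if \<open>\<Omega>\<^sub>d\<close> maps onto \<open>\<int>/p\<int>\<close>; equivalently \<open>2\<pi>/p \<in> F\<^sub>d\<close>. A frequency
  integer set \<open>S\<close> therefore determines the periods as the divisors of elements of \<open>S\<close>, and the
  divisibility condition says precisely that \<open>d\<close> and \<open>e\<close> have the same periods. Periods are
  invariant under isomorphism, because they are detected by continuous characters whose image is
  the group of \<open>p\<close>-th roots of unity. Conversely, if the periods agree, limit periodicity makes
  \<open>\<sigma>\<^sup>k d \<mapsto> \<sigma>\<^sup>k e\<close> uniformly continuous in both directions, and its continuous extension is an
  isomorphism of the hulls.\<close>

lemma dvd_chain_le:
  fixes n :: "nat \<Rightarrow> 'a::comm_monoid_mult"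
  assumes "\<And>j. n j dvd n (Suc j)" "i \<le> k"
  shows "n i dvd n k"
  using assms(2)
proof (induction k rule: dec_induct)
  case (step k)
  then show ?case
    using dvd_trans assms(1) by blast
qed simp

lemma divisor_closure_subset_iff:
  fixes S T :: "'a::comm_monoid_mult set"
  shows "{p. \<exists>n\<in>S. p dvd n} \<subseteq> {p. \<exists>m\<in>T. p dvd m} \<longleftrightarrow> (\<forall>n\<in>S. \<exists>m\<in>T. n dvd m)"
proof
  assume sub: "{p. \<exists>n\<in>S. p dvd n} \<subseteq> {p. \<exists>m\<in>T. p dvd m}"
  show "\<forall>n\<in>S. \<exists>m\<in>T. n dvd m"
  proof
    fix n assume "n \<in> S"
    then have "n \<in> {p. \<exists>n\<in>S. p dvd n}"
      by (auto intro!: bexI[of _ n])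
    with sub show "\<exists>m\<in>T. n dvd m"
      by (simp add: subset_iff)
  qed
next
  assume T: "\<forall>n\<in>S. \<exists>m\<in>T. n dvd m"
  show "{p. \<exists>n\<in>S. p dvd n} \<subseteq> {p. \<exists>m\<in>T. p dvd m}"
  proof (rule subsetI, unfold mem_Collect_eq)
    fix p assume "\<exists>n\<in>S. p dvd n"
    then obtain n m where "p dvd n" "n dvd m" "m \<in> T"
      using T by fast
    then show "\<exists>m\<in>T. p dvd m"
      by (intro bexI[of _ m] dvd_trans[of p n m])
  qed
qed

lemma int_subgroup_principal:
  fixes G :: "int set"
  assumes "P \<in> G" "P \<noteq> 0" and diff: "\<And>a b. a \<in> G \<Longrightarrow> b \<in> G \<Longrightarrow> a - b \<in> G"
  obtains p :: nat where "p > 0" "G = {k. int p dvd k}"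
proof -
  have zero: "0 \<in> G"
    using diff[OF \<open>P \<in> G\<close> \<open>P \<in> G\<close>] by simp
  have neg: "- a \<in> G" if "a \<in> G" for a
    using diff[OF zero that] by simp
  have add: "a + b \<in> G" if "a \<in> G" "b \<in> G" for a b
    using diff[OF that(1) neg[OF that(2)]] by simp
  have mult: "l * a \<in> G" if "a \<in> G" for a l
  proof (induction l rule: int_induct[where k = 0])
    case (step1 i)
    then show ?case
      using add[OF _ that] by (simp add: distrib_right)
  next
    case (step2 i)
    then show ?case
      using diff[OF _ that] by (simp add: left_diff_distrib)
  qed (simp add: zero)
  define p where "p = (LEAST n::nat. n > 0 \<and> int n \<in> G)"
  have "nat \<bar>P\<bar> > 0 \<and> int (nat \<bar>P\<bar>) \<in> G"
    using assms(1,2) neg by (cases "P \<ge> 0") auto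
  then have p: "p > 0" "int p \<in> G"
    unfolding p_def by (metis (mono_tags, lifting) LeastI)+
  have "int p dvd g" if "g \<in> G" for g
  proof (rule ccontr)
    assume "\<not> int p dvd g"
    then have "0 < g mod int p" "g mod int p < int p"
      using p(1) by (auto simp: dvd_eq_mod_eq_0 order_le_neq_trans)
    moreover have "g mod int p \<in> G"
      using add[OF that mult[OF p(2), of "- (g div int p)"]] by (simp add: minus_div_mult_eq_mod)
    ultimately have "nat (g mod int p) < p" "0 < nat (g mod int p) \<and> int (nat (g mod int p)) \<in> G"
      by auto
    then show False
      unfolding p_def using not_less_Least by blast
  qed
  moreover have "k \<in> G" if "int p dvd k" for k
    using that mult[OF p(2)] by (auto elim!: dvdE simp: mult.commute)
  ultimately show ?thesis
    using that p(1) by blast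
qed

text \<open>The library proves this only for metric domains, and \<open>int\<close> is not a metric space; the
  proof does not use the metric of the domain.\<close>

instance bcontfun :: (topological_space, complete_space) complete_space
proof
  fix f :: "nat \<Rightarrow> ('a, 'b) bcontfun"
  assume "Cauchy f"
  then obtain g where "uniform_limit UNIV f g sequentially"
    using uniformly_convergent_eq_cauchy[of "\<lambda>_. True" f]
    unfolding Cauchy_def uniform_limit_sequentially_iff
    by (metis dist_fun_lt_imp_dist_val_lt)
  from uniform_limit_bcontfunE[OF this sequentially_bot]
  obtain l' where "g = apply_bcontfun l'" "f \<longlonglongrightarrow> l'"
    by metis
  then show "convergent f"
    by (intro convergentI)
qed

lemma continuous_on_closure_eqI:
  fixes f g :: "'a::metric_space \<Rightarrow> 'b::metric_space"
  assumes "continuous_on (closure A) f" "continuous_on (closure A) g"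
    and "\<And>x. x \<in> A \<Longrightarrow> f x = g x" and "x \<in> closure A"
  shows "f x = g x"
proof -
  have "continuous_on (closure A) (\<lambda>x. dist (f x) (g x))"
    using assms by (intro continuous_intros)
  from continuous_constant_on_closure[OF this, of 0 x] assms show ?thesis
    by simp
qed

text \<open>No well-definedness assumption is needed: the hypothesis forces \<open>F i\<close> to depend only on
  \<open>\<phi> i\<close>.\<close>

lemma continuous_extension_from_parametrization:
  fixes \<phi> :: "'i \<Rightarrow> 'a::metric_space" and F :: "'i \<Rightarrow> 'b::complete_space"
  assumes uc: "\<And>\<epsilon>. \<epsilon> > 0 \<Longrightarrow> \<exists>\<delta>>0. \<forall>i j. dist (\<phi> i) (\<phi> j) < \<delta> \<longrightarrow> dist (F i) (F j) < \<epsilon>"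
  obtains g where "continuous_on (closure (range \<phi>)) g" "\<And>i. g (\<phi> i) = F i"
    "g ` closure (range \<phi>) \<subseteq> closure (range F)"
proof -
  have well_defined: "F i = F j" if "\<phi> i = \<phi> j" for i j
  proof -
    have "dist (F i) (F j) < \<epsilon>" if "\<epsilon> > 0" for \<epsilon>
      using uc[OF that] \<open>\<phi> i = \<phi> j\<close> by auto
    then show ?thesis
      by (metis dist_eq_0_iff less_irrefl zero_less_dist_iff)
  qed
  define f where "f x = F (SOME i. \<phi> i = x)" for x
  have f: "f (\<phi> i) = F i" for i
    unfolding f_def by (rule well_defined) (rule someI_ex, blast)
  have uc_f: "uniformly_continuous_on (range \<phi>) f"
    unfolding uniformly_continuous_on_def
  proof (intro allI impI)
    fix \<epsilon> :: real assume "\<epsilon> > 0"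
    then obtain \<delta> where "\<delta> > 0" "\<forall>i j. dist (\<phi> i) (\<phi> j) < \<delta> \<longrightarrow> dist (F i) (F j) < \<epsilon>"
      using uc by blast
    then show "\<exists>\<delta>>0. \<forall>x\<in>range \<phi>. \<forall>x'\<in>range \<phi>. dist x' x < \<delta> \<longrightarrow> dist (f x') (f x) < \<epsilon>"
      by (auto simp: f)
  qed
  then obtain g where g: "uniformly_continuous_on (closure (range \<phi>)) g"
    "\<And>x. x \<in> range \<phi> \<Longrightarrow> f x = g x"
    using uniformly_continuous_on_extension_on_closure[OF uc_f] by metis
  then have cont: "continuous_on (closure (range \<phi>)) g"
    by (simp add: uniformly_continuous_imp_continuous)
  moreover have "g (\<phi> i) = F i" for i
    using g(2) f by (metis rangeI)
  moreover have "g ` closure (range \<phi>) \<subseteq> closure (range F)"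
    by (rule image_closure_subset[OF cont]) (auto simp: calculation intro: closure_subset[THEN subsetD])
  ultimately show ?thesis ..
qed

lemma continuous_on_finite_range_locally_constant:
  fixes f :: "'a::metric_space \<Rightarrow> 'b::metric_space"
  assumes "continuous_on S f" "finite (f ` S)" "x \<in> S"
  obtains \<delta> where "\<delta> > 0" "\<And>y. y \<in> S \<Longrightarrow> dist y x < \<delta> \<Longrightarrow> f y = f x"
proof -
  obtain c where c: "c > 0" "\<And>z. z \<in> f ` S \<Longrightarrow> z \<noteq> f x \<Longrightarrow> c \<le> dist (f x) z"
    using finite_set_avoid[OF assms(2)] by blast
  obtain \<delta> where "\<delta> > 0" "\<And>y. y \<in> S \<Longrightarrow> dist y x < \<delta> \<Longrightarrow> dist (f y) (f x) < c"
    using assms(1,3) c(1) unfolding continuous_on_iff by metis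
  moreover have "f y = f x" if "y \<in> S" "dist (f y) (f x) < c" for y
    using c(2)[of "f y"] that by (force simp: dist_commute)
  ultimately show ?thesis
    using that by blast
qed

lemma continuous_on_compose_pair:
  assumes "continuous_on (H \<times> H) g" "continuous_on A a" "continuous_on A b"
    "a ` A \<subseteq> H" "b ` A \<subseteq> H"
  shows "continuous_on A (\<lambda>t. g (a t, b t))"
proof -
  have "continuous_on A (\<lambda>t. (a t, b t))"
    using assms by (intro continuous_intros)
  moreover have "(\<lambda>t. (a t, b t)) ` A \<subseteq> H \<times> H"
    using assms by auto
  ultimately show ?thesis
    using continuous_on_compose2[OF assms(1)] by blast
qed

lemma shiftk_in_bcontfun: "(\<lambda>n. apply_bcontfun (f::linf) (n + k)) \<in> bcontfun"
proof -
  have "bounded (range (\<lambda>n. apply_bcontfun f (n + k)))"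
    by (rule bounded_subset[OF bounded_apply_bcontfun]) auto
  then show ?thesis
    unfolding bcontfun_def by (simp add: continuous_on_discrete)
qed

lemma shiftk_apply [simp]: "apply_bcontfun (shiftk k f) n = apply_bcontfun f (n + k)"
  unfolding shiftk_def by (simp add: Bcontfun_inverse shiftk_in_bcontfun)

lemma shiftk_shiftk [simp]: "shiftk j (shiftk k f) = shiftk (j + k) f"
  by (rule bcontfun_eqI) (simp add: ac_simps)

lemma shiftk_0 [simp]: "shiftk 0 f = f"
  by (rule bcontfun_eqI) simp

lemma dist_shiftk_shiftk_le: "dist (shiftk k f) (shiftk k g) \<le> dist f g"
  by (rule dist_bound) (simp add: dist_bounded)

lemma dist_shiftk_shiftk_same [simp]: "dist (shiftk k f) (shiftk k g) = dist f g"
proof -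
  have "dist f g = dist (shiftk (-k) (shiftk k f)) (shiftk (-k) (shiftk k g))"
    by simp
  also have "\<dots> \<le> dist (shiftk k f) (shiftk k g)"
    by (rule dist_shiftk_shiftk_le)
  finally show ?thesis
    using dist_shiftk_shiftk_le antisym by blast
qed

lemma dist_shiftk_shiftk: "dist (shiftk j d) (shiftk k d) = dist (shiftk (j - k) d) d"
  using dist_shiftk_shiftk_same[of k "shiftk (j - k) d" d] by simp

lemma dist_shiftk_uminus: "dist (shiftk (- k) d) d = dist (shiftk k d) d"
  by (metis diff_0 dist_commute dist_shiftk_shiftk shiftk_0)

lemma orb_eq_range: "orb d = range (\<lambda>k. shiftk k d)"
  unfolding orb_def by auto

lemma shiftk_in_lp_hull [simp]: "shiftk k d \<in> lp_hull d"
  unfolding lp_hull_def orb_eq_range by (rule closure_subset[THEN subsetD]) simp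

lemma self_in_lp_hull [simp]: "d \<in> lp_hull d"
  using shiftk_in_lp_hull[of 0 d] by simp

lemma lp_hull_eqI:
  fixes f h :: "linf \<Rightarrow> 'a::metric_space"
  assumes "continuous_on (lp_hull d) f" "continuous_on (lp_hull d) h"
    and "\<And>k. f (shiftk k d) = h (shiftk k d)" and "x \<in> lp_hull d"
  shows "f x = h x"
  using continuous_on_closure_eqI[of "orb d" f h x] assms
  unfolding lp_hull_def orb_eq_range by auto

lemma lp_hull_image_subset:
  assumes "continuous_on (lp_hull d) f" "closed C" "\<And>k. f (shiftk k d) \<in> C"
  shows "f ` lp_hull d \<subseteq> C"
  using image_closure_subset[of "orb d" f C] assms unfolding lp_hull_def orb_eq_range by auto

lemma dist_shiftk_add_le:
  "dist (shiftk (i + j) d) (shiftk (i' + j') d)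
     \<le> dist (shiftk i d) (shiftk i' d) + dist (shiftk j d) (shiftk j' d)"
proof -
  have "dist (shiftk (i + j) d) (shiftk (i' + j') d)
      \<le> dist (shiftk (i + j) d) (shiftk (i' + j) d) + dist (shiftk (i' + j) d) (shiftk (i' + j') d)"
    by (rule dist_triangle)
  also have "dist (shiftk (i + j) d) (shiftk (i' + j) d) = dist (shiftk i d) (shiftk i' d)"
    by (simp only: dist_shiftk_shiftk) (simp add: algebra_simps)
  also have "dist (shiftk (i' + j) d) (shiftk (i' + j') d) = dist (shiftk j d) (shiftk j' d)"
    by (simp only: dist_shiftk_shiftk) (simp add: algebra_simps)
  finally show ?thesis .
qed

lemma closure_orb_Times: "closure (orb d \<times> orb d) = lp_hull d \<times> lp_hull d"
  unfolding lp_hull_def by (rule closure_Times)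

lemma range_shiftk_pair: "range (\<lambda>(j, k). (shiftk j d, shiftk k d)) = orb d \<times> orb d"
  unfolding orb_eq_range by auto

subsection \<open>The group structure of the hull\<close>

lemma range_shiftk_add: "range (\<lambda>(j, k). shiftk (j + k) d) = orb d"
  unfolding orb_eq_range by (auto intro!: image_eqI[where x = "(_, 0)"])

text \<open>The hull is the completion of the orbit, a copy of \<open>\<int>\<close> with a translation invariant
  metric; addition and negation of indices are uniformly continuous and extend to it.\<close>

lemma hull_addition_exists:
  obtains g where "continuous_on (lp_hull d \<times> lp_hull d) g"
    "\<And>j k. g (shiftk j d, shiftk k d) = shiftk (j + k) d" "g ` (lp_hull d \<times> lp_hull d) \<subseteq> lp_hull d"
proof -
  define \<phi> where "\<phi> = (\<lambda>(j, k). (shiftk j d, shiftk k d))"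
  define F where "F = (\<lambda>(j, k). shiftk (j + k) d)"
  have "\<exists>\<delta>>0. \<forall>p q. dist (\<phi> p) (\<phi> q) < \<delta> \<longrightarrow> dist (F p) (F q) < \<epsilon>"
    if "\<epsilon> > 0" for \<epsilon> :: real
  proof (intro exI[of _ "\<epsilon> / 2"] conjI allI impI)
    fix p q :: "int \<times> int"
    assume "dist (\<phi> p) (\<phi> q) < \<epsilon> / 2"
    then show "dist (F p) (F q) < \<epsilon>"
      using dist_shiftk_add_le[of "fst p" "snd p" d "fst q" "snd q"]
        dist_fst_le[of "\<phi> p" "\<phi> q"] dist_snd_le[of "\<phi> p" "\<phi> q"]
      by (simp add: \<phi>_def F_def case_prod_beta)
  qed (use that in simp)
  from continuous_extension_from_parametrization[OF this] obtain g
    where "continuous_on (closure (range \<phi>)) g" "\<And>p. g (\<phi> p) = F p"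
      "g ` closure (range \<phi>) \<subseteq> closure (range F)"
    by blast
  then show ?thesis
    using that unfolding \<phi>_def F_def range_shiftk_pair range_shiftk_add closure_orb_Times
      lp_hull_def[symmetric] by auto
qed

lemma hull_negation_exists:
  obtains iv where "continuous_on (lp_hull d) iv" "\<And>k. iv (shiftk k d) = shiftk (- k) d"
    "iv ` lp_hull d \<subseteq> lp_hull d"
proof -
  have "dist (shiftk (- i) d) (shiftk (- j) d) = dist (shiftk i d) (shiftk j d)" for i j
    using dist_shiftk_uminus[of "i - j" d] by (simp add: dist_shiftk_shiftk[of _ d])
  then have "\<exists>\<delta>>0. \<forall>i j. dist (shiftk i d) (shiftk j d) < \<delta> \<longrightarrow> dist (shiftk (- i) d) (shiftk (- j) d) < \<epsilon>"
    if "\<epsilon> > 0" for \<epsilon> :: real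
    using that by auto
  from continuous_extension_from_parametrization[OF this] obtain iv
    where "continuous_on (closure (range (\<lambda>k. shiftk k d))) iv"
      "\<And>k. iv (shiftk k d) = shiftk (- k) d"
      "iv ` closure (range (\<lambda>k. shiftk k d)) \<subseteq> closure (range (\<lambda>k. shiftk (- k) d))"
    by blast
  moreover have range_uminus: "range (\<lambda>k. shiftk (- k) d) = orb d"
    unfolding orb_eq_range by (auto intro!: image_eqI[where x = "- _"])
  ultimately show ?thesis
    using that unfolding range_uminus orb_eq_range[symmetric] lp_hull_def[symmetric] by auto
qed

lemma hull_group_exists: "\<exists>m iv. hull_group d m iv"
proof -
  let ?H = "lp_hull d"
  obtain g where gc: "continuous_on (?H \<times> ?H) g"
    and g_shiftk: "\<And>j k. g (shiftk j d, shiftk k d) = shiftk (j + k) d"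
    and g_into: "g ` (?H \<times> ?H) \<subseteq> ?H"
    using hull_addition_exists[of d] by blast
  obtain iv where ivc: "continuous_on ?H iv" and iv_shiftk: "\<And>k. iv (shiftk k d) = shiftk (- k) d"
    and iv_into: "iv ` ?H \<subseteq> ?H"
    using hull_negation_exists[of d] by blast
  have gH: "g (x, y) \<in> ?H" if "x \<in> ?H" "y \<in> ?H" for x y
    using g_into that by blast
  have gcomp: "continuous_on A (\<lambda>t. g (a t, b t))"
    if "continuous_on A a" "continuous_on A b" "a ` A \<subseteq> ?H" "b ` A \<subseteq> ?H" for A a b
    using continuous_on_compose_pair[OF gc that] .
  have cont_g_left: "continuous_on ?H (\<lambda>z. g (c, z))" if "c \<in> ?H" for c
    by (rule gcomp) (use that in \<open>auto intro: continuous_intros\<close>)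
  have cont_g_right: "continuous_on ?H (\<lambda>z. g (z, c))" if "c \<in> ?H" for c
    by (rule gcomp) (use that in \<open>auto intro: continuous_intros\<close>)
  have left_unit: "g (d, x) = x" if "x \<in> ?H" for x
    using lp_hull_eqI[of d "\<lambda>x. g (d, x)" id x] cont_g_left[of d] g_shiftk[of 0] that by simp
  have right_unit: "g (x, d) = x" if "x \<in> ?H" for x
    using lp_hull_eqI[of d "\<lambda>x. g (x, d)" id x] cont_g_right[of d] g_shiftk[of _ 0] that by simp
  have left_inverse: "g (iv x, x) = d" if "x \<in> ?H" for x
    by (rule lp_hull_eqI[of d "\<lambda>x. g (iv x, x)" "\<lambda>_. d"])
      (use that iv_into ivc g_shiftk iv_shiftk in \<open>auto intro!: gcomp continuous_intros\<close>)
  have right_inverse: "g (x, iv x) = d" if "x \<in> ?H" for x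
    by (rule lp_hull_eqI[of d "\<lambda>x. g (x, iv x)" "\<lambda>_. d"])
      (use that iv_into ivc g_shiftk iv_shiftk in \<open>auto intro!: gcomp continuous_intros\<close>)
  have assoc_orbit: "g (g (shiftk i d, shiftk j d), z) = g (shiftk i d, g (shiftk j d, z))"
    if "z \<in> ?H" for i j z
    by (rule lp_hull_eqI[of d "\<lambda>z. g (g (shiftk i d, shiftk j d), z)" "\<lambda>z. g (shiftk i d, g (shiftk j d, z))"])
      (use that gH in \<open>auto intro!: gcomp continuous_intros simp: g_shiftk add.assoc\<close>)
  have assoc_orbit_left: "g (g (shiftk i d, y), z) = g (shiftk i d, g (y, z))"
    if "y \<in> ?H" "z \<in> ?H" for i y z
    by (rule lp_hull_eqI[of d "\<lambda>y. g (g (shiftk i d, y), z)" "\<lambda>y. g (shiftk i d, g (y, z))"])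
      (use that gH assoc_orbit in \<open>auto intro!: gcomp continuous_intros\<close>)
  have assoc: "g (g (x, y), z) = g (x, g (y, z))" if "x \<in> ?H" "y \<in> ?H" "z \<in> ?H" for x y z
    by (rule lp_hull_eqI[of d "\<lambda>x. g (g (x, y), z)" "\<lambda>x. g (x, g (y, z))"])
      (use that gH assoc_orbit_left in \<open>auto intro!: gcomp continuous_intros\<close>)
  have "hull_group d (\<lambda>x y. g (x, y)) iv"
    unfolding hull_group_def
    using gH iv_into assoc left_unit right_unit left_inverse right_inverse gc ivc g_shiftk
    by (auto simp: case_prod_beta')
  then show ?thesis
    by blast
qed

lemma continuous_hom_on_lp_hullI:
  fixes h :: "linf \<Rightarrow> 'a::metric_space"
  assumes G: "hull_group d m iv"
    and hc: "continuous_on (lp_hull d) h" and h_into: "h ` lp_hull d \<subseteq> B"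
    and mulc: "continuous_on (B \<times> B) (\<lambda>(u, v). mul u v)"
    and h_shiftk: "\<And>j k. h (shiftk (j + k) d) = mul (h (shiftk j d)) (h (shiftk k d))"
    and "x \<in> lp_hull d" "y \<in> lp_hull d"
  shows "h (m x y) = mul (h x) (h y)"
proof -
  let ?H = "lp_hull d"
  have mc: "continuous_on (?H \<times> ?H) (\<lambda>(u, v). m u v)" and m_into: "(\<lambda>(u, v). m u v) ` (?H \<times> ?H) \<subseteq> ?H"
    using G unfolding hull_group_def by auto
  have "(\<lambda>(u, v). h (m u v)) (x, y) = (\<lambda>(u, v). mul (h u) (h v)) (x, y)"
  proof (rule continuous_on_closure_eqI[of "orb d \<times> orb d" "\<lambda>(u, v). h (m u v)" "\<lambda>(u, v). mul (h u) (h v)"])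
    show "continuous_on (closure (orb d \<times> orb d)) (\<lambda>(u, v). h (m u v))"
      unfolding closure_orb_Times using continuous_on_compose2[OF hc mc m_into]
      by (simp add: case_prod_beta')
    show "continuous_on (closure (orb d \<times> orb d)) (\<lambda>(u, v). mul (h u) (h v))"
    proof -
      have "continuous_on (?H \<times> ?H) (\<lambda>t. h (fst t))" "continuous_on (?H \<times> ?H) (\<lambda>t. h (snd t))"
        by (auto intro!: continuous_on_compose2[OF hc] continuous_intros)
      from continuous_on_compose_pair[OF mulc this] h_into show ?thesis
        unfolding closure_orb_Times by (force simp: case_prod_beta')
    qed
    show "(\<lambda>(u, v). h (m u v)) q = (\<lambda>(u, v). mul (h u) (h v)) q" if "q \<in> orb d \<times> orb d" for q
      using that G h_shiftk unfolding hull_group_def orb_eq_range by auto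
  qed (use assms closure_orb_Times in auto)
  then show ?thesis
    by simp
qed

lemma hull_iso_sym: "hull_iso d e \<Longrightarrow> hull_iso e d"
proof -
  assume "hull_iso d e"
  then obtain m iv m' iv' f g where G: "hull_group d m iv" "hull_group e m' iv'"
    and hom: "homeomorphism (lp_hull d) (lp_hull e) f g"
    and f_mult: "\<forall>x\<in>lp_hull d. \<forall>y\<in>lp_hull d. f (m x y) = m' (f x) (f y)"
    unfolding hull_iso_def by blast
  have "g (m' x y) = m (g x) (g y)" if "x \<in> lp_hull e" "y \<in> lp_hull e" for x y
  proof -
    have g_into: "g x \<in> lp_hull d" "g y \<in> lp_hull d"
      using hom that homeomorphism_image2 by blast+
    then have "m (g x) (g y) \<in> lp_hull d"
      using G(1) unfolding hull_group_def by blast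
    moreover have "f (m (g x) (g y)) = m' x y"
      using f_mult g_into homeomorphism_apply2[OF hom] that by simp
    ultimately show ?thesis
      using homeomorphism_apply1[OF hom] by metis
  qed
  then show "hull_iso e d"
    unfolding hull_iso_def using G homeomorphism_sym[of "lp_hull d" "lp_hull e" f g] hom by blast
qed

definition root_unity :: "nat \<Rightarrow> int \<Rightarrow> complex" where
  "root_unity p k = exp (\<i> * of_real (of_int k * (2 * pi / real p)))"

lemma root_unity_add: "root_unity p (j + k) = root_unity p j * root_unity p k"
proof -
  have "\<i> * of_real (of_int (j + k) * (2 * pi / real p))
      = \<i> * of_real (of_int j * (2 * pi / real p)) + \<i> * of_real (of_int k * (2 * pi / real p))"
    by (simp add: algebra_simps add_divide_distrib)
  then show ?thesis
    unfolding root_unity_def by (simp only: exp_add)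
qed

lemma root_unity_0 [simp]: "root_unity p 0 = 1"
  unfolding root_unity_def by simp

lemma norm_root_unity [simp]: "norm (root_unity p k) = 1"
  unfolding root_unity_def by simp

lemma root_unity_eq_1_iff:
  assumes "p > 0"
  shows "root_unity p k = 1 \<longleftrightarrow> int p dvd k"
proof -
  have "of_int k * (2 * pi / real p) = of_int (2 * n) * pi \<longleftrightarrow> k = n * int p" for n :: int
  proof -
    have "of_int k * (2 * pi / real p) = of_int (2 * n) * pi \<longleftrightarrow> real_of_int k = of_int n * real p"
      using assms pi_gt_zero by (auto simp: field_simps)
    also have "\<dots> \<longleftrightarrow> k = n * int p"
      by (metis of_int_eq_iff of_int_mult of_int_of_nat_eq)
    finally show ?thesis .
  qed
  then show ?thesis
    unfolding root_unity_def exp_eq_1 by (auto simp: dvd_def mult.commute)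
qed

lemma root_unity_eq_iff:
  assumes "p > 0"
  shows "root_unity p j = root_unity p k \<longleftrightarrow> int p dvd j - k"
  using root_unity_add[of p "j - k" k] root_unity_eq_1_iff[OF assms, of "j - k"]
  by (auto simp: root_unity_def)

lemma root_unity_powi: "root_unity p j powi k = root_unity p (j * k)"
  unfolding root_unity_def exp_power_int by (simp add: algebra_simps)

lemma root_unity_power_p [simp]:
  assumes "p > 0"
  shows "root_unity p k ^ p = 1"
  using root_unity_powi[of p k "int p"] root_unity_eq_1_iff[OF assms, of "k * int p"]
  by (simp add: power_int_of_nat)

lemma finite_range_root_unity: "p > 0 \<Longrightarrow> finite (range (root_unity p))"
  by (rule finite_subset[OF _ finite_roots_unity[of p]]) auto

lemma roots_unity_eq_root_unity:
  assumes "p > 0" "z ^ p = 1"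
  obtains b where "z = root_unity p (int b)"
proof -
  obtain b where "z = exp (2 * of_real pi * \<i> * of_nat b / of_nat p)"
    using complex_roots_unity[of p] assms by auto
  then have "z = root_unity p (int b)"
    unfolding root_unity_def by (simp add: field_simps)
  then show ?thesis ..
qed

subsection \<open>Periods of the hull\<close>

definition hull_periods :: "linf \<Rightarrow> nat set" where
  "hull_periods d = {p. p > 0 \<and> (\<exists>\<delta>>0. \<forall>k. dist (shiftk k d) d < \<delta> \<longrightarrow> int p dvd k)}"

lemma hull_period_character:
  assumes p: "p \<in> hull_periods d" and G: "hull_group d m iv"
  obtains chi where "continuous_on (lp_hull d) chi" "\<And>k. chi (shiftk k d) = root_unity p k"
    "chi ` lp_hull d \<subseteq> range (root_unity p)"
    "\<And>x y. x \<in> lp_hull d \<Longrightarrow> y \<in> lp_hull d \<Longrightarrow> chi (m x y) = chi x * chi y"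
proof -
  obtain \<delta> where p0: "p > 0" and "\<delta> > 0" and \<delta>: "\<And>k. dist (shiftk k d) d < \<delta> \<Longrightarrow> int p dvd k"
    using p unfolding hull_periods_def by blast
  have "\<exists>\<delta>>0. \<forall>i j. dist (shiftk i d) (shiftk j d) < \<delta> \<longrightarrow> dist (root_unity p i) (root_unity p j) < \<epsilon>"
    if "\<epsilon> > 0" for \<epsilon> :: real
    using \<open>\<delta> > 0\<close> that \<delta> root_unity_eq_iff[OF p0] by (metis dist_eq_0_iff dist_shiftk_shiftk)
  then obtain chi where chi_cont: "continuous_on (lp_hull d) chi"
    and chi_shiftk: "\<And>k. chi (shiftk k d) = root_unity p k"
    and "chi ` lp_hull d \<subseteq> closure (range (root_unity p))"
    using continuous_extension_from_parametrization[where \<phi> = "\<lambda>k. shiftk k d"]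
    unfolding lp_hull_def orb_eq_range by metis
  moreover have "closure (range (root_unity p)) = range (root_unity p)"
    by (intro closure_closed finite_imp_closed finite_range_root_unity p0)
  moreover have "chi (m x y) = chi x * chi y" if "x \<in> lp_hull d" "y \<in> lp_hull d" for x y
    by (rule continuous_hom_on_lp_hullI[OF G chi_cont subset_UNIV])
      (use that in \<open>auto simp: chi_shiftk root_unity_add case_prod_beta' intro!: continuous_intros\<close>)
  ultimately show ?thesis
    using that by auto
qed

lemma hull_character_shiftk:
  assumes G: "hull_group d m iv"
    and mult: "\<And>x y. x \<in> lp_hull d \<Longrightarrow> y \<in> lp_hull d \<Longrightarrow> chi (m x y) = chi x * (chi y :: 'a :: field)"
    and "chi d \<noteq> 0"
  shows "chi (shiftk k d) = chi (shiftk 1 d) powi k"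
proof -
  have m_shiftk: "m (shiftk i d) (shiftk j d) = shiftk (i + j) d" for i j
    using G unfolding hull_group_def by blast
  have "chi d = chi d * chi d"
    using mult[of d d] m_shiftk[of 0 0] by simp
  then have chi_d: "chi d = 1"
    using \<open>chi d \<noteq> 0\<close> by simp
  have chi_add: "chi (shiftk (i + j) d) = chi (shiftk i d) * chi (shiftk j d)" for i j
    using mult m_shiftk by (metis shiftk_in_lp_hull)
  have nat_case: "chi (shiftk (int n) d) = chi (shiftk 1 d) ^ n" for n
    by (induction n) (simp_all add: chi_d chi_add[of 1])
  show ?thesis
  proof (cases "k \<ge> 0")
    case True
    then show ?thesis
      using nat_case[of "nat k"] by (simp add: power_int_def)
  next
    case False
    have "chi (shiftk (- k) d) * chi (shiftk k d) = 1"
      using chi_add[of "- k" k] chi_d by simp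
    then have "chi (shiftk k d) = inverse (chi (shiftk (- k) d))"
      by (rule inverse_unique[symmetric])
    then show ?thesis
      using False nat_case[of "nat (- k)"] by (simp add: power_int_def power_inverse)
  qed
qed

text \<open>If \<open>chi (shiftk 1 d) = root_unity p b\<close>, then \<open>root_unity p 1\<close> lying in the image makes \<open>b\<close>
  a unit mod \<open>p\<close>, and local constancy of \<open>chi\<close> at \<open>d\<close> turns closeness of \<open>shiftk k d\<close> to \<open>d\<close>
  into \<open>p dvd b * k\<close>, hence \<open>p dvd k\<close>.\<close>

lemma hull_periodsI_character:
  assumes G: "hull_group d m iv" and chi_cont: "continuous_on (lp_hull d) chi"
    and mult: "\<And>x y. x \<in> lp_hull d \<Longrightarrow> y \<in> lp_hull d \<Longrightarrow> chi (m x y) = chi x * chi y"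
    and p0: "p > 0" and roots: "chi ` lp_hull d \<subseteq> {z. z ^ p = 1}"
    and generator: "root_unity p 1 \<in> chi ` lp_hull d"
  shows "p \<in> hull_periods d"
proof -
  have "chi d ^ p = 1"
    using roots self_in_lp_hull by blast
  then have "chi d \<noteq> 0"
    using p0 by (auto simp: power_0_left)
  have "chi (shiftk 1 d) ^ p = 1"
    using roots shiftk_in_lp_hull by blast
  then obtain b where b: "chi (shiftk 1 d) = root_unity p (int b)"
    using roots_unity_eq_root_unity[OF p0] by blast
  have chi_shiftk: "chi (shiftk k d) = root_unity p (int b * k)" for k
    using hull_character_shiftk[OF G mult \<open>chi d \<noteq> 0\<close>] b by (simp add: root_unity_powi)
  have "range (\<lambda>k. root_unity p (int b * k)) \<subseteq> range (root_unity p)"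
    by auto
  then have "closed (range (\<lambda>k. root_unity p (int b * k)))"
    using finite_range_root_unity[OF p0] by (auto intro: finite_imp_closed finite_subset)
  then have "chi ` lp_hull d \<subseteq> range (\<lambda>k. root_unity p (int b * k))"
    using lp_hull_image_subset[OF chi_cont] chi_shiftk by blast
  with generator obtain j where "root_unity p 1 = root_unity p (int b * j)"
    by blast
  then have b_unit: "int p dvd 1 - int b * j"
    using root_unity_eq_iff[OF p0] by blast
  have "finite (chi ` lp_hull d)"
    using roots finite_roots_unity[of p] p0 by (auto intro: finite_subset)
  then obtain \<delta> where "\<delta> > 0" and \<delta>: "\<And>y. y \<in> lp_hull d \<Longrightarrow> dist y d < \<delta> \<Longrightarrow> chi y = chi d"
    using continuous_on_finite_range_locally_constant[OF chi_cont _ self_in_lp_hull] by blast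
  have "int p dvd k" if "dist (shiftk k d) d < \<delta>" for k
  proof -
    have "root_unity p (int b * k) = 1"
      using \<delta>[OF shiftk_in_lp_hull that] chi_shiftk[of k] chi_shiftk[of 0] by simp
    then have "int p dvd int b * k"
      using root_unity_eq_1_iff[OF p0] by blast
    then have "int p dvd (int b * k) * j + k * (1 - int b * j)"
      using b_unit by (blast intro: dvd_add dvd_mult dvd_mult2)
    moreover have "(int b * k) * j + k * (1 - int b * j) = k"
      by (simp add: algebra_simps)
    ultimately show ?thesis
      by simp
  qed
  then show ?thesis
    unfolding hull_periods_def using p0 \<open>\<delta> > 0\<close> by blast
qed

text \<open>The isomorphism need not map \<open>d\<close> to \<open>e\<close>: the criterion \<open>hull_periodsI_character\<close>
  does not refer to the shift.\<close>

lemma hull_periods_subset_of_iso: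
  assumes "hull_iso d e"
  shows "hull_periods e \<subseteq> hull_periods d"
proof
  fix p assume p: "p \<in> hull_periods e"
  then have p0: "p > 0"
    unfolding hull_periods_def by blast
  obtain md ivd me ive f g where Gd: "hull_group d md ivd" and Ge: "hull_group e me ive"
    and hom: "homeomorphism (lp_hull d) (lp_hull e) f g"
    and f_mult: "\<forall>x\<in>lp_hull d. \<forall>y\<in>lp_hull d. f (md x y) = me (f x) (f y)"
    using assms unfolding hull_iso_def by blast
  obtain chi where chi_cont: "continuous_on (lp_hull e) chi"
    and chi_shiftk: "\<And>k. chi (shiftk k e) = root_unity p k"
    and chi_range: "chi ` lp_hull e \<subseteq> range (root_unity p)"
    and chi_mult: "\<And>x y. x \<in> lp_hull e \<Longrightarrow> y \<in> lp_hull e \<Longrightarrow> chi (me x y) = chi x * chi y"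
    using hull_period_character[OF p Ge] by blast
  have f_onto: "f ` lp_hull d = lp_hull e"
    using hom unfolding homeomorphism_def by blast
  then have image_pullback: "(chi \<circ> f) ` lp_hull d = chi ` lp_hull e"
    by (metis image_comp)
  show "p \<in> hull_periods d"
  proof (rule hull_periodsI_character[OF Gd, of "chi \<circ> f"])
    show "continuous_on (lp_hull d) (chi \<circ> f)"
      using hom chi_cont f_onto unfolding homeomorphism_def by (metis continuous_on_compose)
    show "(chi \<circ> f) (md x y) = (chi \<circ> f) x * (chi \<circ> f) y"
      if "x \<in> lp_hull d" "y \<in> lp_hull d" for x y
    proof -
      have "f x \<in> lp_hull e" "f y \<in> lp_hull e"
        using that f_onto by blast+
      then show ?thesis
        using that f_mult chi_mult by simp
    qed
    show "(chi \<circ> f) ` lp_hull d \<subseteq> {z. z ^ p = 1}"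
      using chi_range p0 unfolding image_pullback by auto
    show "root_unity p 1 \<in> (chi \<circ> f) ` lp_hull d"
      using chi_shiftk[of 1] unfolding image_pullback by (metis image_eqI shiftk_in_lp_hull)
  qed (rule p0)
qed

subsection \<open>Periods and frequency integer sets\<close>

lemma hull_periods_iff_freq_module:
  "p \<in> hull_periods d \<longleftrightarrow> p > 0 \<and> 2 * pi / real p \<in> freq_module d"
proof
  assume p: "p \<in> hull_periods d"
  obtain m iv where G: "hull_group d m iv"
    using hull_group_exists by blast
  obtain chi where chi_cont: "continuous_on (lp_hull d) chi"
    and chi_shiftk: "\<And>k. chi (shiftk k d) = root_unity p k"
    and chi_range: "chi ` lp_hull d \<subseteq> range (root_unity p)"
    and chi_mult: "\<And>x y. x \<in> lp_hull d \<Longrightarrow> y \<in> lp_hull d \<Longrightarrow> chi (m x y) = chi x * chi y"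
    using hull_period_character[OF p G] by blast
  have "2 * pi / real p \<in> freq_module d"
    unfolding freq_module_def
  proof (intro CollectI exI conjI ballI allI)
    show "chi ` lp_hull d \<subseteq> sphere 0 1"
      using chi_range by auto
    show "chi (shiftk k d) = exp (\<i> * of_real (of_int k * (2 * pi / real p)))" for k
      using chi_shiftk unfolding root_unity_def .
    show "chi (m x y) = chi x * chi y" if "x \<in> lp_hull d" "y \<in> lp_hull d" for x y
      using chi_mult that .
  qed (fact G chi_cont)+
  moreover have "p > 0"
    using p unfolding hull_periods_def by blast
  ultimately show "p > 0 \<and> 2 * pi / real p \<in> freq_module d"
    by blast
next
  assume "p > 0 \<and> 2 * pi / real p \<in> freq_module d"
  then obtain m iv chi where p0: "p > 0" and G: "hull_group d m iv"
    and chi_cont: "continuous_on (lp_hull d) chi"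
    and chi_mult: "\<forall>x\<in>lp_hull d. \<forall>y\<in>lp_hull d. chi (m x y) = chi x * chi y"
    and chi_exp: "\<forall>k. chi (shiftk k d) = exp (\<i> * of_real (of_int k * (2 * pi / real p)))"
    unfolding freq_module_def by blast
  have chi_shiftk: "chi (shiftk k d) = root_unity p k" for k
    using chi_exp unfolding root_unity_def by blast
  have "chi x ^ p = 1" if "x \<in> lp_hull d" for x
    by (rule lp_hull_eqI[of d "\<lambda>x. chi x ^ p" "\<lambda>_. 1"])
      (use that chi_cont chi_shiftk p0 in \<open>auto intro: continuous_intros\<close>)
  then have roots: "chi ` lp_hull d \<subseteq> {z. z ^ p = 1}"
    by auto
  have "root_unity p 1 \<in> chi ` lp_hull d"
    using chi_shiftk[of 1] by (metis image_eqI shiftk_in_lp_hull)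
  with hull_periodsI_character[OF G chi_cont _ p0 roots] chi_mult show "p \<in> hull_periods d"
    by blast
qed

lemma sum_of_int_mult_Ints:
  assumes "finite B" "y = (\<Sum>a\<in>B. of_int (c a) * a)" "\<And>a. a \<in> B \<Longrightarrow> a * x \<in> \<int>"
  shows "y * x \<in> \<int>"
proof -
  have "y * x = (\<Sum>a\<in>B. of_int (c a) * (a * x))"
    unfolding assms(2) sum_distrib_right by (simp add: mult.assoc)
  also have "\<dots> \<in> \<int>"
    by (intro Ints_sum Ints_mult[OF Ints_of_int]) (use assms(3) in auto)
  finally show ?thesis .
qed

lemma two_pi_div_mem_int_span_iff:
  assumes n: "\<And>j. 0 < n j" "\<And>j. n j dvd n (Suc j)" and p0: "p > 0"
  shows "2 * pi / real p \<in> int_span ((\<lambda>k. 2 * pi / real k) ` range n) \<longleftrightarrow> (\<exists>j. p dvd n j)"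
proof
  assume "2 * pi / real p \<in> int_span ((\<lambda>k. 2 * pi / real k) ` range n)"
  then obtain B c where "finite B" and B_sub: "B \<subseteq> (\<lambda>j. 2 * pi / real (n j)) ` UNIV"
    and sum: "2 * pi / real p = (\<Sum>a\<in>B. of_int (c a) * a)"
    unfolding int_span_def image_image mem_Collect_eq by blast
  obtain J where "finite J" and B: "B = (\<lambda>j. 2 * pi / real (n j)) ` J"
    using finite_subset_image[OF \<open>finite B\<close> B_sub] by blast
  define N where "N = n (Max (insert 0 J))"
  have "a * (real N / (2 * pi)) \<in> \<int>" if a: "a \<in> B" for a
  proof -
    obtain j where "j \<in> J" "a = 2 * pi / real (n j)"
      using a B by blast
    moreover have "n j dvd N"
      unfolding N_def using \<open>finite J\<close> \<open>j \<in> J\<close> by (intro dvd_chain_le[of n, OF n(2)]) auto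
    then obtain t where "N = n j * t"
      by blast
    ultimately have "a * (real N / (2 * pi)) = of_nat t"
      using n(1)[of j] by (simp add: field_simps)
    then show ?thesis
      by simp
  qed
  from sum_of_int_mult_Ints[OF \<open>finite B\<close> sum this]
  have "real N / real p \<in> \<int>"
    by simp
  then obtain t :: int where "real N / real p = of_int t"
    by (elim Ints_cases)
  then have "real N = real p * of_int t"
    using p0 by (simp add: field_simps)
  then have "real_of_int (int N) = real_of_int (int p * t)"
    by simp
  then have "int N = int p * t"
    by (simp only: of_int_eq_iff)
  then have "p dvd N"
    by (simp add: dvdI flip: int_dvd_int_iff)
  then show "\<exists>j. p dvd n j"
    unfolding N_def by blast
next
  assume "\<exists>j. p dvd n j"
  then obtain j t where t: "n j = p * t"
    by (auto elim: dvdE)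
  then have "2 * pi / real p = of_int (int t) * (2 * pi / real (n j))"
    using n(1)[of j] by (simp add: field_simps)
  then show "2 * pi / real p \<in> int_span ((\<lambda>k. 2 * pi / real k) ` range n)"
    unfolding int_span_def mem_Collect_eq
    by (intro exI[of _ "{2 * pi / real (n j)}"] exI[of _ "\<lambda>_. int t"]) auto
qed

lemma hull_periods_freq_int_set:
  assumes "freq_int_set d S"
  shows "hull_periods d = {p. \<exists>n\<in>S. p dvd n}"
proof -
  obtain n :: "nat \<Rightarrow> nat" where S: "S = range n" and n: "\<And>j. 0 < n j" "\<And>j. n j dvd n (Suc j)"
    and F: "freq_module d = int_span ((\<lambda>k. 2 * pi / real k) ` S)"
    using assms unfolding freq_int_set_def by blast
  have "p \<in> hull_periods d \<longleftrightarrow> (\<exists>m\<in>S. p dvd m)" for p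
  proof (cases "p > 0")
    case True
    then show ?thesis
      unfolding hull_periods_iff_freq_module F S
      using two_pi_div_mem_int_span_iff[of n, OF n True] by simp
  next
    case False
    moreover have "\<forall>m\<in>S. m > 0"
      using S n(1) by blast
    ultimately show ?thesis
      unfolding hull_periods_iff_freq_module by auto
  qed
  then show ?thesis
    by blast
qed

subsection \<open>Limit-periodic potentials\<close>

lemma shiftk_multiple_period:
  assumes "shiftk P q = q"
  shows "shiftk (l * P) q = q"
proof (induction l rule: int_induct[where k = 0])
  case (step1 i)
  then show ?case
    using assms by (metis shiftk_shiftk distrib_right mult_1 add.commute)
next
  case (step2 i)
  have "shiftk (- P) q = q"
    using assms by (metis shiftk_shiftk shiftk_0 add.left_inverse)
  with step2 show ?case
    by (metis shiftk_shiftk left_diff_distrib mult_1 diff_conv_add_uminus add.commute)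
qed simp

lemma periodic_pot_period:
  assumes "periodic_pot q"
  obtains P :: int where "P > 0" "shiftk P q = q"
proof -
  have "finite (range (\<lambda>n::nat. shiftk (int n) q))"
    using assms unfolding periodic_pot_def orb_eq_range by (rule finite_subset[rotated]) auto
  then have "\<not> inj (\<lambda>n::nat. shiftk (int n) q)"
    using finite_imageD infinite_UNIV_nat by blast
  then obtain a b :: nat where "a < b" "shiftk (int a) q = shiftk (int b) q"
    unfolding inj_def by (metis linorder_neqE_nat)
  then have "shiftk (int b - int a) q = q"
    by (metis shiftk_shiftk add.commute diff_add_cancel shiftk_0 add.right_inverse
        diff_conv_add_uminus)
  moreover have "int b - int a > 0"
    using \<open>a < b\<close> by simp
  ultimately show ?thesis
    using that by blast
qed

lemma limit_periodic_almost_period: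
  assumes "limit_periodic d" "\<epsilon> > 0"
  obtains P :: int where "P > 0" "\<And>k. P dvd k \<Longrightarrow> dist (shiftk k d) d < \<epsilon>"
proof -
  obtain q where "periodic_pot q" and q: "dist q d < \<epsilon> / 2"
    using assms unfolding limit_periodic_def closure_approachable
    by (metis half_gt_zero mem_Collect_eq)
  then obtain P where "P > 0" and P: "shiftk P q = q"
    using periodic_pot_period by blast
  have "dist (shiftk k d) d < \<epsilon>" if "P dvd k" for k
  proof -
    have "shiftk k q = q"
      using that shiftk_multiple_period[OF P] by (auto elim!: dvdE simp: mult.commute)
    then have "dist (shiftk k d) d \<le> dist (shiftk k d) (shiftk k q) + dist q d"
      using dist_triangle by metis
    then show ?thesis
      using q by (simp add: dist_commute)
  qed
  with \<open>P > 0\<close> show ?thesis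
    using that by blast
qed

definition return_residues :: "int \<Rightarrow> linf \<Rightarrow> int set" where
  "return_residues P d = {r. \<forall>\<eta>>0. \<exists>k. k mod P = r mod P \<and> dist (shiftk k d) d < \<eta>}"

lemma return_residues_principal:
  assumes "P > 0"
  obtains p :: nat where "p > 0" "return_residues P d = {k. int p dvd k}"
proof (rule int_subgroup_principal[of P])
  show "P \<in> return_residues P d"
    unfolding return_residues_def by (auto intro!: exI[of _ 0])
  show "a - b \<in> return_residues P d"
    if a: "a \<in> return_residues P d" and b: "b \<in> return_residues P d" for a b
    unfolding return_residues_def
  proof (intro CollectI allI impI)
    fix \<eta> :: real assume "\<eta> > 0"
    then have "\<eta> / 2 > 0"
      by simp
    then obtain i j where ij: "i mod P = a mod P" "j mod P = b mod P"
      and "dist (shiftk i d) d < \<eta> / 2" "dist (shiftk j d) d < \<eta> / 2"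
      using a b unfolding return_residues_def mem_Collect_eq by meson
    moreover have "dist (shiftk (i - j) d) d \<le> dist (shiftk i d) d + dist (shiftk j d) d"
      unfolding dist_shiftk_shiftk[symmetric] by (rule dist_triangle2)
    moreover have "(i - j) mod P = (a - b) mod P"
      using ij by (rule mod_diff_cong)
    ultimately show "\<exists>k. k mod P = (a - b) mod P \<and> dist (shiftk k d) d < \<eta>"
      by force
  qed
qed (use assms that in auto)

lemma return_residues_near:
  assumes "P > 0"
  obtains \<delta> where "\<delta> > 0" "\<And>k. dist (shiftk k d) d < \<delta> \<Longrightarrow> k \<in> return_residues P d"
proof -
  let ?G = "return_residues P d"
  have "\<forall>r\<in>{0..<P}. \<exists>\<eta>. \<eta> > 0 \<and> (r \<in> ?G \<or> (\<forall>k. k mod P = r \<longrightarrow> \<eta> \<le> dist (shiftk k d) d))"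
  proof
    fix r assume r: "r \<in> {0..<P}"
    show "\<exists>\<eta>. \<eta> > 0 \<and> (r \<in> ?G \<or> (\<forall>k. k mod P = r \<longrightarrow> \<eta> \<le> dist (shiftk k d) d))"
    proof (cases "r \<in> ?G")
      case False
      then obtain \<eta> where "\<eta> > 0" "\<forall>k. k mod P = r mod P \<longrightarrow> \<not> dist (shiftk k d) d < \<eta>"
        unfolding return_residues_def by blast
      moreover have "r mod P = r"
        using r by simp
      ultimately show ?thesis
        by (intro exI[of _ \<eta>]) (simp add: not_less)
    qed (intro exI[of _ 1], simp)
  qed
  from bchoice[OF this] obtain \<eta> where \<eta>: "\<forall>r\<in>{0..<P}. \<eta> r > 0 \<and>
      (r \<in> ?G \<or> (\<forall>k. k mod P = r \<longrightarrow> \<eta> r \<le> dist (shiftk k d) d))"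
    by blast
  define \<delta> where "\<delta> = Min (\<eta> ` {0..<P})"
  have "\<delta> > 0"
    unfolding \<delta>_def using \<open>P > 0\<close> \<eta> by (subst Min_gr_iff) auto
  moreover have "k \<in> ?G" if "dist (shiftk k d) d < \<delta>" for k
  proof -
    have r: "k mod P \<in> {0..<P}"
      using \<open>P > 0\<close> by simp
    then have "\<delta> \<le> \<eta> (k mod P)"
      unfolding \<delta>_def by (intro Min_le) auto
    moreover have "k \<in> ?G \<longleftrightarrow> k mod P \<in> ?G"
      unfolding return_residues_def by simp
    ultimately show ?thesis
      using \<eta> r that by fastforce
  qed
  ultimately show ?thesis
    using that by blast
qed

lemma hull_period_of_almost_period:
  assumes "P > 0" and P: "\<And>k. P dvd k \<Longrightarrow> dist (shiftk k d) d < \<epsilon>"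
  obtains p where "p \<in> hull_periods d" "\<And>k. int p dvd k \<Longrightarrow> dist (shiftk k d) d < 2 * \<epsilon>"
proof -
  obtain p where "p > 0" and G: "return_residues P d = {k. int p dvd k}"
    using return_residues_principal[OF \<open>P > 0\<close>] by blast
  obtain \<delta> where "\<delta> > 0" "\<And>k. dist (shiftk k d) d < \<delta> \<Longrightarrow> k \<in> return_residues P d"
    using return_residues_near[OF \<open>P > 0\<close>] by blast
  then have "p \<in> hull_periods d"
    unfolding hull_periods_def G using \<open>p > 0\<close> by blast
  moreover have "dist (shiftk k d) d < 2 * \<epsilon>" if "int p dvd k" for k
  proof -
    have "\<epsilon> > 0"
      using P[of 0] by simp
    moreover have "k \<in> return_residues P d"
      using that G by simp
    ultimately obtain k' where k': "k' mod P = k mod P" "dist (shiftk k' d) d < \<epsilon>"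
      unfolding return_residues_def mem_Collect_eq by blast
    then have "dist (shiftk (k - k') d) d < \<epsilon>"
      by (intro P) (simp add: mod_eq_dvd_iff dvd_diff_commute)
    moreover have "dist (shiftk k d) d \<le> dist (shiftk (k - k') d) d + dist (shiftk k' d) d"
      unfolding dist_shiftk_shiftk[symmetric] by (rule dist_triangle)
    ultimately show ?thesis
      using k' by simp
  qed
  ultimately show ?thesis
    using that by blast
qed

lemma limit_periodic_hull_period:
  assumes "limit_periodic d" "\<epsilon> > 0"
  obtains p where "p \<in> hull_periods d" "\<And>k. int p dvd k \<Longrightarrow> dist (shiftk k d) d < \<epsilon>"
proof -
  obtain P :: int where "P > 0" "\<And>k. P dvd k \<Longrightarrow> dist (shiftk k d) d < \<epsilon> / 2"
    using limit_periodic_almost_period[OF assms(1)] assms(2) half_gt_zero by blast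
  from hull_period_of_almost_period[OF this] that show ?thesis
    by auto
qed

lemma hull_map_of_periods:
  assumes periods: "hull_periods e \<subseteq> hull_periods d" and "limit_periodic e"
  obtains f where "continuous_on (lp_hull d) f" "\<And>k. f (shiftk k d) = shiftk k e"
    "f ` lp_hull d \<subseteq> lp_hull e"
proof -
  have "\<exists>\<delta>>0. \<forall>i j. dist (shiftk i d) (shiftk j d) < \<delta> \<longrightarrow> dist (shiftk i e) (shiftk j e) < \<epsilon>"
    if \<epsilon>: "\<epsilon> > 0" for \<epsilon> :: real
  proof -
    obtain p where "p \<in> hull_periods e" and near: "\<And>k. int p dvd k \<Longrightarrow> dist (shiftk k e) e < \<epsilon>"
      using limit_periodic_hull_period[OF \<open>limit_periodic e\<close> \<epsilon>] by blast
    then obtain \<delta> where "\<delta> > 0" and \<delta>: "\<And>k. dist (shiftk k d) d < \<delta> \<Longrightarrow> int p dvd k"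
      using periods unfolding hull_periods_def by blast
    show ?thesis
    proof (intro exI[of _ \<delta>] conjI allI impI)
      fix i j assume "dist (shiftk i d) (shiftk j d) < \<delta>"
      then have "int p dvd i - j"
        using \<delta> by (simp add: dist_shiftk_shiftk)
      then show "dist (shiftk i e) (shiftk j e) < \<epsilon>"
        using near by (simp add: dist_shiftk_shiftk)
    qed (rule \<open>\<delta> > 0\<close>)
  qed
  from continuous_extension_from_parametrization[OF this] that show ?thesis
    unfolding lp_hull_def orb_eq_range by blast
qed

lemma hull_iso_of_periods:
  assumes "hull_periods d = hull_periods e" "limit_periodic d" "limit_periodic e"
  shows "hull_iso d e"
proof -
  obtain f where fc: "continuous_on (lp_hull d) f" and f_shiftk: "\<And>k. f (shiftk k d) = shiftk k e"
    and f_into: "f ` lp_hull d \<subseteq> lp_hull e"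
    using hull_map_of_periods[of e d] assms by auto
  obtain g where gc: "continuous_on (lp_hull e) g" and g_shiftk: "\<And>k. g (shiftk k e) = shiftk k d"
    and g_into: "g ` lp_hull e \<subseteq> lp_hull d"
    using hull_map_of_periods[of d e] assms by auto
  have "homeomorphism (lp_hull d) (lp_hull e) f g"
  proof (rule homeomorphismI[OF fc gc f_into g_into])
    show "g (f x) = x" if "x \<in> lp_hull d" for x
      by (rule lp_hull_eqI[of d "\<lambda>x. g (f x)" "\<lambda>x. x"])
        (use continuous_on_compose2[OF gc fc f_into] that f_shiftk g_shiftk in auto)
    show "f (g y) = y" if "y \<in> lp_hull e" for y
      by (rule lp_hull_eqI[of e "\<lambda>y. f (g y)" "\<lambda>y. y"])
        (use continuous_on_compose2[OF fc gc g_into] that f_shiftk g_shiftk in auto)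
  qed
  moreover obtain md ivd me ive where Gd: "hull_group d md ivd" and Ge: "hull_group e me ive"
    using hull_group_exists by metis
  moreover have "f (md x y) = me (f x) (f y)" if "x \<in> lp_hull d" "y \<in> lp_hull d" for x y
  proof (rule continuous_hom_on_lp_hullI[OF Gd fc f_into _ _ that])
    show "continuous_on (lp_hull e \<times> lp_hull e) (\<lambda>(u, v). me u v)"
      using Ge unfolding hull_group_def by blast
    show "f (shiftk (j + k) d) = me (f (shiftk j d)) (f (shiftk k d))" for j k
      using Ge unfolding hull_group_def f_shiftk by metis
  qed
  ultimately show ?thesis
    unfolding hull_iso_def by blast
qed

lemma hull_iso_iff_hull_periods:
  assumes "limit_periodic d" "limit_periodic e"
  shows "hull_iso d e \<longleftrightarrow> hull_periods d = hull_periods e"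
proof
  assume iso: "hull_iso d e"
  show "hull_periods d = hull_periods e"
    using hull_periods_subset_of_iso[OF hull_iso_sym[OF iso]] hull_periods_subset_of_iso[OF iso]
    by (rule subset_antisym)
qed (rule hull_iso_of_periods[OF _ assms])

theorem theorem2p10:
  fixes d e :: "int \<Rightarrow>\<^sub>C real" and S T :: "nat set"
  assumes "limit_periodic d" and "limit_periodic e"
    and "freq_int_set d S" and "freq_int_set e T"
  shows "hull_iso d e \<longleftrightarrow>
           (\<forall>n\<in>S. \<exists>m\<in>T. n dvd m) \<and> (\<forall>m\<in>T. \<exists>n\<in>S. m dvd n)"
proof -
  have "hull_iso d e \<longleftrightarrow> hull_periods d = hull_periods e"
    by (rule hull_iso_iff_hull_periods[OF assms(1,2)])
  also have "\<dots> \<longleftrightarrow> {p. \<exists>n\<in>S. p dvd n} = {p. \<exists>m\<in>T. p dvd m}"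
    unfolding hull_periods_freq_int_set[OF assms(3)] hull_periods_freq_int_set[OF assms(4)] ..
  also have "\<dots> \<longleftrightarrow> (\<forall>n\<in>S. \<exists>m\<in>T. n dvd m) \<and> (\<forall>m\<in>T. \<exists>n\<in>S. m dvd n)"
    unfolding set_eq_subset divisor_closure_subset_iff ..
  finally show ?thesis .
qed

end
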